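(* Let $(B_t)_{t\ge 0}$ be a standard Brownian motion. Then the process $(tB_t)_{t>0}$ is a process with proportional increments on $]0,+\infty[$: writing $N_t=tB_t$ and $\mathcal{F}_t=\sigma(N_u:u\le t)$, for every $t>0$ with $N_t\neq 0$ and every $s\ge 0$, $E(N_{t+s}-N_t\mid\mathcal{F}_t)=\frac{s}{t}N_t$ a.s.
   Context: A stochastic process $(N_t)_{t>0}$ on a probability space, with natural filtration $\mathcal{F}_t=\sigma(N_u: u\le t)$, is called a process with proportional increments on $]0,+\infty[$ if for all $t>0$ with $N_t\neq 0$ and all $s\ge 0$: $E(N_{t+s}-N_t\mid\mathcal{F}_t)=\frac{s}{t}N_t$ almost surely. *)

theory Defs
  imports "HOL-Probability.Probability"
begin

definition std_brownian_motion :: "'a measure \<Rightarrow> (real \<Rightarrow> 'a \<Rightarrow> real) \<Rightarrow> bool" where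
  "std_brownian_motion M B \<longleftrightarrow>
     prob_space M \<and>
     (\<forall>t\<ge>0. B t \<in> borel_measurable M) \<and>
     (AE x in M. B 0 x = 0) \<and>
     (AE x in M. continuous_on {0..} (\<lambda>t. B t x)) \<and>
     (\<forall>ts::real list. sorted_wrt (<) ts \<and> (\<forall>u\<in>set ts. 0 \<le> u) \<longrightarrow>
        prob_space.indep_vars M (\<lambda>_. borel)
          (\<lambda>i x. B (ts ! Suc i) x - B (ts ! i) x) {..<length ts - 1}) \<and>
     (\<forall>s t. 0 \<le> s \<and> s < t \<longrightarrow>
        distributed M lborel (\<lambda>x. B t x - B s x) (\<lambda>y. ennreal (normal_density 0 (sqrt (t - s)) y)))"

definition natural_filtration :: "'a measure \<Rightarrow> (real \<Rightarrow> 'a \<Rightarrow> real) \<Rightarrow> real \<Rightarrow> 'a measure" where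
  "natural_filtration M N t =
     sigma (space M) {N u -` A \<inter> space M | u A. u \<in> {0<..t} \<and> A \<in> sets borel}"

end

theory Submission
  imports Defs
begin

text \<open>Write N_t = t B_t. Then N_{t+s} - N_t = (t + s) (B_{t+s} - B_t) + (s/t) N_t, and the second
summand is F_t-measurable. Every N_u with u \<le> t is a multiple of B_u, and B_u - B_0 is a sum of
increments along a grid of [0, t]; these are independent of B_{t+s} - B_t, so by a \<pi>-\<lambda> argument
over finite-dimensional cylinder sets the whole of F_t is independent of B_{t+s} - B_t. A centred
variable independent of F_t has conditional expectation 0, which leaves (s/t) N_t.\<close>

lemma (in prob_space) real_cond_exp_indep:
  fixes X :: "'a \<Rightarrow> real"
  assumes F: "subalgebra M F" and X: "integrable M X"
    and indep: "indep_set (sets F) (sigma_sets (space M) {X -` S \<inter> space M | S. S \<in> sets borel})"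
  shows "AE x in M. real_cond_exp M F X x = expectation X"
proof -
  interpret F: sigma_finite_subalgebra M F
    using F by (intro finite_measure_subalgebra_is_sigma_finite) unfold_locales
  show ?thesis
  proof (rule F.real_cond_exp_charact)
    fix A assume A: "A \<in> sets F"
    then have A_M: "A \<in> events"
      using F by (auto simp: subalgebra_def)
    have "indep_var borel (indicator A :: 'a \<Rightarrow> real) borel X"
      unfolding indep_var_eq
    proof (intro conjI)
      have sub: "sigma_sets (space M) {(indicator A :: 'a \<Rightarrow> real) -` S \<inter> space M | S. S \<in> sets borel}
          \<subseteq> sets F"
      proof -
        have "{(indicator A :: 'a \<Rightarrow> real) -` S \<inter> space F | S. S \<in> sets borel} \<subseteq> sets F"
          using A by (auto intro: measurable_sets)
        then show ?thesis
          using F sets.sigma_sets_subset[of _ F] by (simp add: subalgebra_def)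
      qed
      show "indep_set
          (sigma_sets (space M) {(indicator A :: 'a \<Rightarrow> real) -` S \<inter> space M | S. S \<in> sets borel})
          (sigma_sets (space M) {X -` S \<inter> space M | S. S \<in> sets borel})"
        using indep unfolding indep_set_def
        by (rule indep_sets_mono_sets) (use sub in \<open>auto split: bool.split\<close>)
    qed (use A_M X in auto)
    then have "(\<integral>x. indicator A x * X x \<partial>M) = (\<integral>x. indicator A x \<partial>M) * expectation X"
      using A_M X by (intro indep_var_lebesgue_integral) (auto simp: emeasure_eq_measure)
    then show "(\<integral>x\<in>A. X x \<partial>M) = (\<integral>x\<in>A. expectation X \<partial>M)"
      using A_M by (simp add: set_lebesgue_integral_def mult.commute)
  qed (use X in auto)
qed

lemma Int_stable_vimage_sets: "Int_stable {f -` A \<inter> S | A. A \<in> sets N}"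
proof (rule Int_stableI)
  fix a b assume "a \<in> {f -` A \<inter> S | A. A \<in> sets N}" "b \<in> {f -` A \<inter> S | A. A \<in> sets N}"
  then obtain A C where "a = f -` A \<inter> S" "b = f -` C \<inter> S" "A \<in> sets N" "C \<in> sets N"
    by blast
  then show "a \<inter> b \<in> {f -` A \<inter> S | A. A \<in> sets N}"
    by (intro CollectI exI[of _ "A \<inter> C"]) auto
qed

lemma vimage_comp_subset_vimage_sets:
  assumes "g \<in> measurable N K" "f \<in> space M \<rightarrow> space N"
  shows "{(\<lambda>x. g (f x)) -` A \<inter> space M | A. A \<in> sets K} \<subseteq> {f -` A \<inter> space M | A. A \<in> sets N}"
proof clarify
  fix A assume "A \<in> sets K"
  then have "(\<lambda>x. g (f x)) -` A \<inter> space M = f -` (g -` A \<inter> space N) \<inter> space M"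
    "g -` A \<inter> space N \<in> sets N"
    using assms by (auto intro: measurable_sets)
  then show "\<exists>A'. (\<lambda>x. g (f x)) -` A \<inter> space M = f -` A' \<inter> space M \<and> A' \<in> sets N"
    by blast
qed

lemma (in prob_space) indep_set_vimage_comp:
  assumes "indep_var Ma X Mb Y" "f \<in> measurable Ma Na" "g \<in> measurable Mb Nb"
  shows "indep_set (sigma_sets (space M) {(\<lambda>x. f (X x)) -` A \<inter> space M | A. A \<in> sets Na})
    (sigma_sets (space M) {(\<lambda>x. g (Y x)) -` A \<inter> space M | A. A \<in> sets Nb})"
proof -
  have X: "X \<in> space M \<rightarrow> space Ma" and Y: "Y \<in> space M \<rightarrow> space Mb"
    using indep_var_rv1[OF assms(1)] indep_var_rv2[OF assms(1)] by (simp_all add: measurable_def)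
  have "indep_set (sigma_sets (space M) {X -` A \<inter> space M | A. A \<in> sets Ma})
      (sigma_sets (space M) {Y -` A \<inter> space M | A. A \<in> sets Mb})"
    using assms(1) by (simp add: indep_var_eq)
  then show ?thesis
    unfolding indep_set_def
  proof (rule indep_sets_mono_sets)
    fix i :: bool
    show "case_bool (sigma_sets (space M) {(\<lambda>x. f (X x)) -` A \<inter> space M | A. A \<in> sets Na})
        (sigma_sets (space M) {(\<lambda>x. g (Y x)) -` A \<inter> space M | A. A \<in> sets Nb}) i
      \<subseteq> case_bool (sigma_sets (space M) {X -` A \<inter> space M | A. A \<in> sets Ma})
        (sigma_sets (space M) {Y -` A \<inter> space M | A. A \<in> sets Mb}) i"
      using sigma_sets_mono'[OF vimage_comp_subset_vimage_sets[OF assms(2) X]]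
        sigma_sets_mono'[OF vimage_comp_subset_vimage_sets[OF assms(3) Y]]
      by (cases i) simp_all
  qed
qed

lemma grid_through_finite_set:
  fixes J :: "real set"
  assumes "finite J" "J \<subseteq> {0<..t}" "0 < t" "t < t'"
  obtains L n and k :: "real \<Rightarrow> nat" where "sorted_wrt (<) L" "\<forall>u\<in>set L. 0 \<le> u"
    "length L = n + 3" "L ! 0 = 0" "L ! (n + 1) = t" "L ! (n + 2) = t'"
    "\<And>u. u \<in> J \<Longrightarrow> k u \<le> n + 1 \<and> L ! k u = u"
proof -
  define ts where "ts = sorted_list_of_set (J - {t})"
  define n where "n = length ts"
  define L where "L = 0 # ts @ [t, t']"
  have ts: "sorted_wrt (<) ts" "set ts = J - {t}"
    using assms(1) by (simp_all add: ts_def)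
  then have "\<forall>u\<in>set ts. 0 < u \<and> u < t"
    using assms(2) by fastforce
  then have "sorted_wrt (<) L" "\<forall>u\<in>set L. 0 \<le> u"
    using ts(1) assms(3,4) by (auto simp: L_def sorted_wrt_append)
  moreover have "\<exists>k\<le>n + 1. L ! k = u" if "u \<in> J" for u
  proof (cases "u = t")
    case True
    then show ?thesis
      by (intro exI[of _ "n + 1"]) (simp add: L_def n_def nth_append)
  next
    case False
    with that ts(2) obtain j where "j < n" "ts ! j = u"
      by (metis DiffI in_set_conv_nth n_def singletonD)
    then show ?thesis
      by (intro exI[of _ "Suc j"]) (simp add: L_def n_def nth_append)
  qed
  then obtain k where "\<And>u. u \<in> J \<Longrightarrow> k u \<le> n + 1 \<and> L ! k u = u"
    by metis
  moreover have "length L = n + 3" "L ! 0 = 0" "L ! (n + 1) = t" "L ! (n + 2) = t'"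
    by (simp_all add: L_def n_def nth_append)
  ultimately show ?thesis
    using that by blast
qed

lemma space_natural_filtration [simp]: "space (natural_filtration M N t) = space M"
  unfolding natural_filtration_def by (rule space_measure_of) auto

lemma sets_natural_filtration:
  "sets (natural_filtration M N t) =
     sigma_sets (space M) {N u -` A \<inter> space M | u A. u \<in> {0<..t} \<and> A \<in> sets borel}"
  unfolding natural_filtration_def by (rule sets_measure_of) auto

lemma measurable_natural_filtration:
  assumes "u \<in> {0<..t}"
  shows "N u \<in> borel_measurable (natural_filtration M N t)"
  using assms by (intro measurableI) (auto simp: sets_natural_filtration)

lemma subalgebra_natural_filtration:
  assumes "\<And>u. u \<in> {0<..t} \<Longrightarrow> N u \<in> borel_measurable M"
  shows "subalgebra M (natural_filtration M N t)"
  unfolding subalgebra_def sets_natural_filtration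
  using assms by (auto intro!: sets.sigma_sets_subset measurable_sets)

definition cylinder_sets :: "'a measure \<Rightarrow> ('i \<Rightarrow> 'a \<Rightarrow> 'b::topological_space) \<Rightarrow> 'i set \<Rightarrow> 'a set set"
  where "cylinder_sets M X I =
    {{x \<in> space M. \<forall>i\<in>J. X i x \<in> A i} | J A. finite J \<and> J \<subseteq> I \<and> (\<forall>i\<in>J. A i \<in> sets borel)}"

lemma Int_stable_cylinder_sets: "Int_stable (cylinder_sets M X I)"
proof (rule Int_stableI)
  fix a b assume "a \<in> cylinder_sets M X I" "b \<in> cylinder_sets M X I"
  then obtain J A K C where
      a: "a = {x \<in> space M. \<forall>i\<in>J. X i x \<in> A i}" "finite J" "J \<subseteq> I" "\<forall>i\<in>J. A i \<in> sets borel" and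
      b: "b = {x \<in> space M. \<forall>i\<in>K. X i x \<in> C i}" "finite K" "K \<subseteq> I" "\<forall>i\<in>K. C i \<in> sets borel"
    unfolding cylinder_sets_def by blast
  define D where "D i = (if i \<in> J then A i else UNIV) \<inter> (if i \<in> K then C i else UNIV)" for i
  have "a \<inter> b = {x \<in> space M. \<forall>i\<in>J \<union> K. X i x \<in> D i}"
    unfolding a(1) b(1) D_def by auto
  moreover have "\<forall>i\<in>J \<union> K. D i \<in> sets borel"
    using a(4) b(4) by (auto simp: D_def)
  ultimately show "a \<inter> b \<in> cylinder_sets M X I"
    using a(2,3) b(2,3) unfolding cylinder_sets_def by blast
qed

lemma sets_natural_filtration_subset_cylinders:
  fixes B :: "real \<Rightarrow> 'a \<Rightarrow> real"
  shows "sets (natural_filtration M (\<lambda>u x. u * B u x) t) \<subseteq>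
    sigma_sets (space M) (cylinder_sets M B {0<..t})"
  unfolding sets_natural_filtration
proof (rule sigma_sets_mono', clarify)
  fix u :: real and A :: "real set" assume u: "u \<in> {0<..t}" and A: "A \<in> sets borel"
  have "(\<lambda>x. u * B u x) -` A \<inter> space M = {x \<in> space M. \<forall>v\<in>{u}. B v x \<in> (\<lambda>y. u * y) -` A}"
    by auto
  moreover have "(\<lambda>y. u * y) -` A \<inter> space borel \<in> sets borel"
    by (rule measurable_sets[OF _ A]) simp
  ultimately show "(\<lambda>x. u * B u x) -` A \<inter> space M \<in> cylinder_sets M B {0<..t}"
    using u unfolding cylinder_sets_def
    by (intro CollectI exI[of _ "{u}"] exI[of _ "\<lambda>_. (\<lambda>y. u * y) -` A"]) auto
qed

locale brownian_motion =
  fixes M :: "'a measure" and B :: "real \<Rightarrow> 'a \<Rightarrow> real"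
  assumes std_brownian_motion: "std_brownian_motion M B"

sublocale brownian_motion \<subseteq> prob_space M
  using std_brownian_motion unfolding std_brownian_motion_def by blast

context brownian_motion
begin

lemma borel_measurable_B: "0 \<le> u \<Longrightarrow> B u \<in> borel_measurable M"
  using std_brownian_motion unfolding std_brownian_motion_def by blast

lemma AE_B_0: "AE x in M. B 0 x = 0"
  using std_brownian_motion unfolding std_brownian_motion_def by blast

lemma indep_increments:
  assumes "sorted_wrt (<) ts" "\<forall>u\<in>set ts. 0 \<le> u"
  shows "indep_vars (\<lambda>_. borel) (\<lambda>i x. B (ts ! Suc i) x - B (ts ! i) x) {..<length ts - 1}"
  using std_brownian_motion assms unfolding std_brownian_motion_def by blast

lemma distributed_increment:
  assumes "0 \<le> s" "s < t"
  shows "distributed M lborel (\<lambda>x. B t x - B s x) (\<lambda>y. ennreal (normal_density 0 (sqrt (t - s)) y))"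
  using std_brownian_motion assms unfolding std_brownian_motion_def by blast

lemma integrable_increment:
  assumes "0 \<le> s" "s \<le> t"
  shows "integrable M (\<lambda>x. B t x - B s x)"
proof (cases "s = t")
  case False
  then show ?thesis
    using assms distributed_integrable_var[OF distributed_increment] integrable_normal_moment_nz_1
    by simp
qed simp

lemma expectation_increment:
  assumes "0 \<le> s" "s \<le> t"
  shows "expectation (\<lambda>x. B t x - B s x) = 0"
proof (cases "s = t")
  case False
  then show ?thesis
    using assms normal_distributed_expectation[OF _ distributed_increment] by simp
qed simp

lemma integrable_B:
  assumes "0 \<le> u"
  shows "integrable M (B u)"
proof -
  have "AE x in M. B u x - B 0 x = B u x"
    using AE_B_0 by eventually_elim simp
  then show ?thesis
    using integrable_increment[of 0 u] assms
    by (auto intro: integrable_cong_AE_imp borel_measurable_B)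
qed

lemma indep_set_past_increment:
  assumes "finite J" "J \<subseteq> {0<..t}" "0 < t" "t < t'"
  shows "indep_set
    (sigma_sets (space M) {(\<lambda>x. \<lambda>u\<in>J. B u x - B 0 x) -` A \<inter> space M | A. A \<in> sets (\<Pi>\<^sub>M u\<in>J. borel)})
    (sigma_sets (space M) {(\<lambda>x. B t' x - B t x) -` A \<inter> space M | A. A \<in> sets borel})"
proof -
  obtain L n and k :: "real \<Rightarrow> nat" where L: "sorted_wrt (<) L" "\<forall>u\<in>set L. 0 \<le> u"
      "length L = n + 3" "L ! 0 = 0" "L ! (n + 1) = t" "L ! (n + 2) = t'"
    and k: "\<And>u. u \<in> J \<Longrightarrow> k u \<le> n + 1 \<and> L ! k u = u"
    using grid_through_finite_set[OF assms] by blast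
  txt \<open>Of the increments along the grid, the first n + 1 determine every B u - B 0 with u \<in> J
    by telescoping, and the last one is B t' - B t.\<close>
  define Y where "Y = (\<lambda>i x. B (L ! Suc i) x - B (L ! i) x)"
  have "indep_vars (\<lambda>_. borel) Y {..<n + 2}"
    using indep_increments[OF L(1,2)] L(3) by (simp add: Y_def)
  then have "indep_var (\<Pi>\<^sub>M i\<in>{..n}. borel) (\<lambda>x. \<lambda>i\<in>{..n}. Y i x)
      (\<Pi>\<^sub>M i\<in>{n + 1}. borel) (\<lambda>x. \<lambda>i\<in>{n + 1}. Y i x)"
    by (rule indep_var_restrict) auto
  moreover have "(\<lambda>y. \<lambda>u\<in>J. \<Sum>i<k u. y i :: real) \<in> measurable (\<Pi>\<^sub>M i\<in>{..n}. borel) (\<Pi>\<^sub>M u\<in>J. borel)"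
  proof (rule measurable_restrict)
    fix u assume "u \<in> J"
    then have "k u \<le> n + 1"
      using k by blast
    show "(\<lambda>y. \<Sum>i<k u. y i :: real) \<in> borel_measurable (\<Pi>\<^sub>M i\<in>{..n}. borel)"
      by (rule borel_measurable_sum)
        (use \<open>k u \<le> n + 1\<close> in \<open>auto intro!: measurable_component_singleton\<close>)
  qed
  moreover have "(\<lambda>y. y (n + 1) :: real) \<in> borel_measurable (\<Pi>\<^sub>M i\<in>{n + 1}. borel)"
    by measurable
  ultimately have "indep_set
    (sigma_sets (space M) {(\<lambda>x. (\<lambda>u\<in>J. \<Sum>i<k u. (\<lambda>i\<in>{..n}. Y i x) i)) -` A \<inter> space M | A. A \<in> sets (\<Pi>\<^sub>M u\<in>J. borel)})
    (sigma_sets (space M) {(\<lambda>x. (\<lambda>i\<in>{n + 1}. Y i x) (n + 1)) -` A \<inter> space M | A. A \<in> sets borel})"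
    by (rule indep_set_vimage_comp)
  moreover have "B u x - B 0 x = (\<Sum>i<k u. (\<lambda>i\<in>{..n}. Y i x) i)" if "u \<in> J" for u x
    using k[OF that] sum_lessThan_telescope[of "\<lambda>i. B (L ! i) x" "k u"] L(4)
    by (simp add: Y_def)
  then have "(\<lambda>x. (\<lambda>u\<in>J. \<Sum>i<k u. (\<lambda>i\<in>{..n}. Y i x) i)) = (\<lambda>x. \<lambda>u\<in>J. B u x - B 0 x)"
    by (simp add: fun_eq_iff)
  moreover have "(\<lambda>x. (\<lambda>i\<in>{n + 1}. Y i x) (n + 1)) = (\<lambda>x. B t' x - B t x)"
    using L(5,6) by (simp add: fun_eq_iff Y_def)
  ultimately show ?thesis
    by simp
qed

lemma cylinder_sets_subset_events:
  assumes "T \<subseteq> {0..}"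
  shows "cylinder_sets M B T \<subseteq> events"
proof
  fix c assume "c \<in> cylinder_sets M B T"
  then obtain J A where c: "c = {x \<in> space M. \<forall>u\<in>J. B u x \<in> A u}" "finite J" "J \<subseteq> T"
      "\<forall>u\<in>J. A u \<in> sets borel"
    unfolding cylinder_sets_def by blast
  have "{x \<in> space M. B u x \<in> A u} \<in> events" if "u \<in> J" for u
    using that c(3,4) assms borel_measurable_B[of u] measurable_sets[of "B u" M borel "A u"]
    by (auto simp: Int_def conj_commute)
  then show "c \<in> events"
    unfolding c(1) using c(2) by (rule sets.sets_Collect_finite_All)
qed

lemma indep_set_cylinders_increment:
  assumes "0 < t" "t < t'"
  shows "indep_set (sigma_sets (space M) (cylinder_sets M B {0<..t}))
    (sigma_sets (space M) {(\<lambda>x. B t' x - B t x) -` A \<inter> space M | A. A \<in> sets borel})"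
proof (rule indep_set_sigma_sets[OF indep_setI Int_stable_cylinder_sets Int_stable_vimage_sets])
  show "cylinder_sets M B {0<..t} \<subseteq> events"
    by (rule cylinder_sets_subset_events) auto
  show "{(\<lambda>x. B t' x - B t x) -` A \<inter> space M | A. A \<in> sets borel} \<subseteq> events"
    using assms borel_measurable_B by (auto intro!: measurable_sets)
  fix c d
  assume "c \<in> cylinder_sets M B {0<..t}"
    and d: "d \<in> {(\<lambda>x. B t' x - B t x) -` A \<inter> space M | A. A \<in> sets borel}"
  then obtain J A where c: "c = {x \<in> space M. \<forall>u\<in>J. B u x \<in> A u}" "finite J" "J \<subseteq> {0<..t}"
      "\<forall>u\<in>J. A u \<in> sets borel"
    unfolding cylinder_sets_def by blast
  txt \<open>B 0 vanishes only almost surely, so c is compared with its version in terms of B u - B 0.\<close>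
  define c' where "c' = {x \<in> space M. \<forall>u\<in>J. B u x - B 0 x \<in> A u}"
  note indep = indep_set_past_increment[OF c(2,3) assms]
  have "c' = (\<lambda>x. \<lambda>u\<in>J. B u x - B 0 x) -` (\<Pi>\<^sub>E u\<in>J. A u) \<inter> space M"
    by (auto simp: c'_def)
  moreover have "(\<Pi>\<^sub>E u\<in>J. A u) \<in> sets (\<Pi>\<^sub>M u\<in>J. borel)"
    using c(2,4) by (intro sets_PiM_I_finite) auto
  ultimately have c'_past: "c' \<in> sigma_sets (space M)
      {(\<lambda>x. \<lambda>u\<in>J. B u x - B 0 x) -` A \<inter> space M | A. A \<in> sets (\<Pi>\<^sub>M u\<in>J. borel)}"
    by blast
  have d_future: "d \<in> sigma_sets (space M) {(\<lambda>x. B t' x - B t x) -` A \<inter> space M | A. A \<in> sets borel}"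
    using d by blast
  have "prob (c' \<inter> d) = prob c' * prob d"
    using indep c'_past d_future by (rule indep_setD)
  moreover have "prob c = prob c'" "prob (c \<inter> d) = prob (c' \<inter> d)"
  proof -
    have "c' \<in> events" "d \<in> events"
      using indep c'_past d_future unfolding indep_sets2_eq by blast+
    moreover have "c \<in> events"
      using \<open>c \<in> cylinder_sets M B {0<..t}\<close> cylinder_sets_subset_events[of "{0<..t}"]
      by (auto simp: subset_eq)
    moreover have ae: "AE x in M. x \<in> c \<longleftrightarrow> x \<in> c'"
      using AE_B_0 by eventually_elim (simp add: c(1) c'_def)
    then have "AE x in M. x \<in> c \<inter> d \<longleftrightarrow> x \<in> c' \<inter> d"
      by eventually_elim blast
    ultimately show "prob c = prob c'" "prob (c \<inter> d) = prob (c' \<inter> d)"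
      using measure_eq_AE[OF ae] measure_eq_AE[of "c \<inter> d" "c' \<inter> d"] by simp_all
  qed
  ultimately show "prob (c \<inter> d) = prob c * prob d"
    by simp
qed

lemma sigma_finite_subalgebra_natural_filtration:
  "sigma_finite_subalgebra M (natural_filtration M (\<lambda>u x. u * B u x) t)"
proof -
  have "subalgebra M (natural_filtration M (\<lambda>u x. u * B u x) t)"
    using borel_measurable_B by (intro subalgebra_natural_filtration) auto
  then show ?thesis
    by (intro finite_measure_subalgebra_is_sigma_finite) unfold_locales
qed

lemma real_cond_exp_increment:
  assumes "0 < t" "t \<le> t'"
  shows "AE x in M. real_cond_exp M (natural_filtration M (\<lambda>u x. u * B u x) t) (\<lambda>x. B t' x - B t x) x = 0"
proof (cases "t = t'")
  case True
  interpret sigma_finite_subalgebra M "natural_filtration M (\<lambda>u x. u * B u x) t"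
    by (rule sigma_finite_subalgebra_natural_filtration)
  show ?thesis
    using real_cond_exp_F_meas[of "\<lambda>x. 0"] True by simp
next
  case False
  have "indep_set (sets (natural_filtration M (\<lambda>u x. u * B u x) t))
    (sigma_sets (space M) {(\<lambda>x. B t' x - B t x) -` A \<inter> space M | A. A \<in> sets borel})"
  proof -
    have "t < t'"
      using assms False by simp
    show ?thesis
      using indep_set_cylinders_increment[OF \<open>0 < t\<close> \<open>t < t'\<close>] unfolding indep_set_def
      by (rule indep_sets_mono_sets)
        (use sets_natural_filtration_subset_cylinders in \<open>auto split: bool.split\<close>)
  qed
  then have "AE x in M. real_cond_exp M (natural_filtration M (\<lambda>u x. u * B u x) t) (\<lambda>x. B t' x - B t x) x
      = expectation (\<lambda>x. B t' x - B t x)"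
    using assms sigma_finite_subalgebra.subalg[OF sigma_finite_subalgebra_natural_filtration]
    by (intro real_cond_exp_indep integrable_increment) auto
  then show ?thesis
    using expectation_increment assms by simp
qed

lemma real_cond_exp_proportional_increment:
  assumes "0 < t" "0 \<le> s"
  shows "AE x in M. real_cond_exp M (natural_filtration M (\<lambda>u x. u * B u x) t)
    (\<lambda>x. (t + s) * B (t + s) x - t * B t x) x = s * B t x"
proof -
  interpret F: sigma_finite_subalgebra M "natural_filtration M (\<lambda>u x. u * B u x) t"
    by (rule sigma_finite_subalgebra_natural_filtration)
  let ?E = "real_cond_exp M (natural_filtration M (\<lambda>u x. u * B u x) t)"
  define X where "X = (\<lambda>x. B (t + s) x - B t x)"
  have decomp: "(\<lambda>x. (t + s) * B (t + s) x - t * B t x) = (\<lambda>x. (t + s) * X x + s * B t x)"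
    by (auto simp: X_def fun_eq_iff algebra_simps)
  have X: "integrable M X" and Bt: "integrable M (B t)"
    using assms integrable_increment integrable_B by (auto simp: X_def)
  have "AE x in M. ?E (\<lambda>x. (t + s) * X x + s * B t x) x = ?E (\<lambda>x. (t + s) * X x) x + ?E (\<lambda>x. s * B t x) x"
    using X Bt by (intro F.real_cond_exp_add) auto
  moreover have "AE x in M. ?E (\<lambda>x. (t + s) * X x) x = (t + s) * ?E X x"
    using X by (rule F.real_cond_exp_cmult)
  moreover have "AE x in M. ?E X x = 0"
    using assms real_cond_exp_increment[of t "t + s"] by (simp add: X_def)
  moreover have "AE x in M. ?E (\<lambda>x. s * B t x) x = s * B t x"
  proof (rule F.real_cond_exp_F_meas)
    show "integrable M (\<lambda>x. s * B t x)"
      using Bt by simp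
    have "(\<lambda>x. t * B t x) \<in> borel_measurable (natural_filtration M (\<lambda>u x. u * B u x) t)"
      using assms measurable_natural_filtration[where N="\<lambda>u x. u * B u x" and u=t] by simp
    then have "(\<lambda>x. s / t * (t * B t x)) \<in> borel_measurable (natural_filtration M (\<lambda>u x. u * B u x) t)"
      by (rule borel_measurable_times[OF borel_measurable_const])
    moreover have "(\<lambda>x. s / t * (t * B t x)) = (\<lambda>x. s * B t x)"
      using assms by (simp add: fun_eq_iff)
    ultimately show "(\<lambda>x. s * B t x) \<in> borel_measurable (natural_filtration M (\<lambda>u x. u * B u x) t)"
      by simp
  qed
  ultimately show ?thesis
    unfolding decomp by eventually_elim simp
qed

end

theorem mainTheorem3:
  fixes M :: "'a measure" and B :: "real \<Rightarrow> 'a \<Rightarrow> real"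
  assumes "std_brownian_motion M B"
  defines "N \<equiv> (\<lambda>t x. t * B t x)"
  shows "\<forall>t s. 0 < t \<and> 0 \<le> s \<longrightarrow>
           (AE x in M. N t x \<noteq> 0 \<longrightarrow>
              real_cond_exp M (natural_filtration M N t) (\<lambda>y. N (t + s) y - N t y) x
                = (s / t) * N t x)"
proof (intro allI impI)
  fix t s :: real assume ts: "0 < t \<and> 0 \<le> s"
  interpret brownian_motion M B
    by (rule brownian_motion.intro) (rule assms(1))
  have "AE x in M. real_cond_exp M (natural_filtration M N t) (\<lambda>y. N (t + s) y - N t y) x = s * B t x"
    unfolding N_def using ts by (intro real_cond_exp_proportional_increment) auto
  then show "AE x in M. N t x \<noteq> 0 \<longrightarrow>
      real_cond_exp M (natural_filtration M N t) (\<lambda>y. N (t + s) y - N t y) x = (s / t) * N t x"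
    using ts by eventually_elim (simp add: N_def)
qed

end
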